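(* For integers $n>d\ge2$, \[ \bar\delta_{n,d}\ge\frac{d^d}{(d+1)^{d+1}}\cdot\frac{(n-d)^{d+1}}{(n-d)(n-d+1)\cdots n} \] and \[ \bar\delta_{n,d}\le\frac{d^d}{(d+1)^{d+1}}\cdot\frac{\left(n-\frac{d-1}{2}\right)^{d+1}}{(n-d)(n-d+1)\cdots n}+\frac{(d+1)(n+1)}{(d-1)(n-d)^2}. \]
   Context: For integers $\lambda\ge0$, $d\ge1$, write $\lambda=\sum_{i=1}^d\binom{k_i}{i}$ uniquely with $k_d>\cdots>k_1\ge0$ and set $\lambda^{[d]}=\sum_{i=1}^d\binom{k_i}{i+1}$. For $n>d$ and $0\le\lambda\le\binom nd$ let $\delta_{n,d}(\lambda)=\lambda/\binom nd-\lambda^{[d]}/\binom n{d+1}$, and $\bar\delta_{n,d}=\max_{0\le\lambda\le\binom nd}\delta_{n,d}(\lambda)$ (denoted $\delta_{n,d}$ in the paper's section on limits). *)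

theory Defs
  imports Complex_Main
begin

definition cascade_rep :: "nat \<Rightarrow> nat \<Rightarrow> (nat \<Rightarrow> nat) \<Rightarrow> bool" where
  "cascade_rep d lam k \<longleftrightarrow>
     (\<forall>i. i \<notin> {1..d} \<longrightarrow> k i = 0) \<and>
     (\<forall>i\<in>{1..<d}. k i < k (Suc i)) \<and>
     lam = (\<Sum>i=1..d. k i choose i)"

definition cascade_seq :: "nat \<Rightarrow> nat \<Rightarrow> nat \<Rightarrow> nat" where
  "cascade_seq d lam = (THE k. cascade_rep d lam k)"

definition upper_shadow :: "nat \<Rightarrow> nat \<Rightarrow> nat" where
  "upper_shadow d lam = (\<Sum>i=1..d. cascade_seq d lam i choose (i + 1))"

definition delta :: "nat \<Rightarrow> nat \<Rightarrow> nat \<Rightarrow> real" where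
  "delta n d lam = real lam / real (n choose d) - real (upper_shadow d lam) / real (n choose (d + 1))"

definition delta_bar :: "nat \<Rightarrow> nat \<Rightarrow> real" where
  "delta_bar n d = Max ((\<lambda>lam. delta n d lam) ` {0..n choose d})"

end

theory Submission
  imports Defs "HOL-Analysis.Convex"
begin

text \<open>Write lam in cascade form lam = \<Sum>i=1..d. (k_i choose i). Then delta n d lam is the sum of the
  terms (k_i choose i) / (n choose d) - (k_i choose (i + 1)) / (n choose (d + 1)). The top term equals
  k (k - 1) \<dots> (k - d + 1) (n - k) / ((n - d) \<dots> n) with k = k_d: the AM-GM inequality bounds it
  from above, and lam = (K choose d) with K - d + 1 close to d (n - d) / (d + 1) attains the lower bound.
  Each lower term is at most a majorant that does not depend on k_i, and for n - d \<ge> 3 these majorants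
  decrease geometrically with ratio (d + 1) / (n + 1) from i = d - 1 downwards; their sum gives the
  error term. For n - d \<le> 2 the error term is at least 1 \<ge> delta n d lam.\<close>

section \<open>Cascade representations\<close>

lemma cascade_partial_sum_less:
  assumes "\<forall>i\<in>{1..<j}. k i < k (Suc i)" and "1 \<le> j"
  shows "(\<Sum>i=1..j. k i choose i) < (k j + 1) choose j"
  using assms
proof (induction j)
  case 0
  then show ?case by simp
next
  case (Suc j)
  show ?case
  proof (cases "j = 0")
    case True
    then show ?thesis by simp
  next
    case False
    have IH: "(\<Sum>i=1..j. k i choose i) < (k j + 1) choose j"
      using Suc False by auto
    have "k j < k (Suc j)" using Suc.prems False by auto
    have "(\<Sum>i=1..Suc j. k i choose i) = (\<Sum>i=1..j. k i choose i) + (k (Suc j) choose Suc j)"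
      by simp
    also have "\<dots> < ((k j + 1) choose j) + (k (Suc j) choose Suc j)"
      using IH by simp
    also have "\<dots> \<le> (k (Suc j) choose j) + (k (Suc j) choose Suc j)"
      using binomial_right_mono[of "k j + 1" "k (Suc j)" j] \<open>k j < k (Suc j)\<close> by simp
    also have "\<dots> = (k (Suc j) + 1) choose Suc j"
      by simp
    finally show ?thesis .
  qed
qed

lemma cascade_rep_top_bounds:
  assumes "cascade_rep d lam k" and "1 \<le> d"
  shows "k d choose d \<le> lam" and "lam < (k d + 1) choose d"
proof -
  have lam: "lam = (\<Sum>i=1..d. k i choose i)"
    using assms(1) unfolding cascade_rep_def by blast
  show "k d choose d \<le> lam"
    unfolding lam using assms(2) by (intro member_le_sum) auto
  show "lam < (k d + 1) choose d"
    unfolding lam using assms cascade_partial_sum_less unfolding cascade_rep_def by blast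
qed

lemma cascade_rep_remove_top:
  assumes "cascade_rep (Suc d) lam k"
  shows "cascade_rep d (lam - (k (Suc d) choose Suc d)) (k(Suc d := 0))"
  using assms unfolding cascade_rep_def by auto

lemma cascade_rep_unique:
  "cascade_rep d lam k \<Longrightarrow> cascade_rep d lam k' \<Longrightarrow> k = k'"
proof (induction d arbitrary: lam k k')
  case 0
  then show ?case unfolding cascade_rep_def by auto
next
  case (Suc d)
  have not_less: "\<not> l (Suc d) < l' (Suc d)"
    if "cascade_rep (Suc d) lam l" "cascade_rep (Suc d) lam l'" for l l'
  proof
    assume "l (Suc d) < l' (Suc d)"
    then have "(l (Suc d) + 1) choose Suc d \<le> l' (Suc d) choose Suc d"
      by (intro binomial_right_mono) simp
    then show False
      using cascade_rep_top_bounds[OF that(1)] cascade_rep_top_bounds[OF that(2)] by simp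
  qed
  have top: "k (Suc d) = k' (Suc d)"
    using not_less[OF Suc.prems] not_less[OF Suc.prems(2,1)] by simp
  have "k(Suc d := 0) = k'(Suc d := 0)"
    using Suc.IH cascade_rep_remove_top[OF Suc.prems(1)] cascade_rep_remove_top[OF Suc.prems(2)] top
    by simp
  then show ?case
    using top by (metis fun_upd_triv fun_upd_upd)
qed

lemma cascade_rep_exists:
  "lam < M choose d \<Longrightarrow> \<exists>k. cascade_rep d lam k \<and> (1 \<le> d \<longrightarrow> k d < M)"
proof (induction d arbitrary: lam M)
  case 0
  then have "cascade_rep 0 lam (\<lambda>_. 0)"
    unfolding cascade_rep_def by simp
  then show ?case by auto
next
  case (Suc d)
  define L where "L = (LEAST t. lam < t choose Suc d)"
  have L: "lam < L choose Suc d"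
    unfolding L_def by (rule LeastI[of _ M]) (use Suc.prems in simp)
  have "L \<le> M"
    unfolding L_def by (rule Least_le) (use Suc.prems in simp)
  obtain t where tL: "L = Suc t"
    using L by (cases L) auto
  have t_le: "t choose Suc d \<le> lam"
    using not_less_Least[of t "\<lambda>t. lam < t choose Suc d"] tL unfolding L_def by fastforce
  have "lam - (t choose Suc d) < t choose d"
    using t_le L tL by simp
  from Suc.IH[OF this] obtain k' where k': "cascade_rep d (lam - (t choose Suc d)) k'"
    and k'd: "1 \<le> d \<longrightarrow> k' d < t" by blast
  define k where "k = k'(Suc d := t)"
  have "(\<Sum>i=1..d. k i choose i) = (\<Sum>i=1..d. k' i choose i)"
    by (rule sum.cong) (auto simp: k_def)
  then have "cascade_rep (Suc d) lam k"
    using k' k'd t_le unfolding cascade_rep_def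
    by (auto simp: k_def less_Suc_eq nat_less_le[of _ "Suc d"])
  moreover have "k (Suc d) < M"
    using tL \<open>L \<le> M\<close> by (simp add: k_def)
  ultimately show ?case by blast
qed

lemma cascade_seq_eqI: "cascade_rep d lam k \<Longrightarrow> cascade_seq d lam = k"
  unfolding cascade_seq_def using cascade_rep_unique by blast

lemma cascade_rep_cascade_seq:
  assumes "lam < M choose d"
  shows "cascade_rep d lam (cascade_seq d lam)" and "1 \<le> d \<Longrightarrow> cascade_seq d lam d < M"
  using cascade_rep_exists[OF assms] cascade_seq_eqI by auto

section \<open>Splitting delta along the cascade\<close>

definition delta_term :: "nat \<Rightarrow> nat \<Rightarrow> nat \<Rightarrow> nat \<Rightarrow> real" where
  "delta_term n d i k =
     real (k choose i) / real (n choose d) - real (k choose (i + 1)) / real (n choose (d + 1))"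

lemma delta_eq_sum_delta_term:
  assumes "cascade_rep d lam k"
  shows "delta n d lam = (\<Sum>i=1..d. delta_term n d i (k i))"
proof -
  have lam: "lam = (\<Sum>i=1..d. k i choose i)"
    using assms unfolding cascade_rep_def by blast
  have "upper_shadow d lam = (\<Sum>i=1..d. k i choose (i + 1))"
    unfolding upper_shadow_def cascade_seq_eqI[OF assms] ..
  then show ?thesis
    unfolding delta_def delta_term_def sum_subtractf
    by (subst lam) (simp add: sum_divide_distrib)
qed

lemma real_binomial_eq_prod: "real (k choose i) = (\<Prod>j<i. real k - real j) / fact i"
  by (simp add: binomial_gbinomial gbinomial_prod_rev atLeast0LessThan)

lemma real_binomial_Suc_mult:
  "real (k choose Suc i) * real (Suc i) = real (k choose i) * (real k - real i)"
  using gbinomial_mult_1[of "real k" i] by (simp add: binomial_gbinomial algebra_simps)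

lemma real_binomial_Suc_eq:
  assumes "d < n"
  shows "real (n choose Suc d) = real (n choose d) * real (n - d) / (real d + 1)"
  using real_binomial_Suc_mult[of n d] assms by (simp add: of_nat_diff field_simps)

lemma prod_atLeastAtMost_eq_binomial_fact:
  assumes "d < n"
  shows "(\<Prod>j=n-d..n. real j) = real (n choose (d + 1)) * fact (d + 1)"
proof -
  have "fact n = fact (n - Suc d) * \<Prod>{n - d..n}"
    using fact_eq_fact_times[of "n - Suc d" n] assms by (simp add: Suc_diff_Suc)
  then have "real (fact n) = real (fact (n - Suc d) * \<Prod>{n - d..n})"
    by (rule arg_cong)
  then have "fact n = fact (n - Suc d) * (\<Prod>j=n-d..n. real j)"
    unfolding of_nat_mult of_nat_fact of_nat_prod .
  moreover have "real (n choose Suc d) = fact n / (fact (Suc d) * fact (n - Suc d))"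
    using assms by (simp add: binomial_fact)
  ultimately show ?thesis
    by simp
qed

lemma delta_term_eq:
  assumes "d < n"
  shows "delta_term n d i k =
           real (k choose i) * ((real i + 1) * (real n + 1) - (real d + 1) * (real k + 1))
           / ((real i + 1) * real (n choose d) * real (n - d))"
proof -
  define A C m where "A = real (n choose d)" and "C = real (k choose i)" and "m = real (n - d)"
  have "A \<noteq> 0" "m \<noteq> 0"
    using assms by (auto simp: A_def m_def)
  have n: "real n = m + real d"
    using assms by (simp add: m_def)
  have K: "real (k choose (i + 1)) = C * (real k - real i) / (real i + 1)"
    using real_binomial_Suc_mult[of k i] by (simp add: C_def field_simps)
  have B: "real (n choose (d + 1)) = A * m / (real d + 1)"
    using real_binomial_Suc_eq[OF assms] by (simp add: A_def m_def)
  have "delta_term n d i k = C / A - C * (real k - real i) / (real i + 1) / (A * m / (real d + 1))"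
    unfolding delta_term_def K B by (simp add: A_def C_def)
  also have "\<dots> = C * ((real i + 1) * (real n + 1) - (real d + 1) * (real k + 1))
                     / ((real i + 1) * A * m)"
    unfolding n using \<open>A \<noteq> 0\<close> \<open>m \<noteq> 0\<close> by (simp add: divide_simps) (simp add: algebra_simps)
  finally show ?thesis
    by (simp add: A_def C_def m_def)
qed

lemma delta_term_top_eq:
  assumes "d < n"
  shows "delta_term n d d k = (\<Prod>j<d. real k - real j) * (real n - real k) / (\<Prod>j=n-d..n. real j)"
proof -
  define F B where "F = (\<Prod>j<d. real k - real j)" and "B = real (n choose (d + 1))"
  have "B \<noteq> 0" "real d + 1 \<noteq> 0"
    using assms by (auto simp: B_def)
  have AB: "(real d + 1) * real (n choose d) * real (n - d) = (real d + 1) * (B * (real d + 1))"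
    using real_binomial_Suc_eq[OF assms] by (simp add: B_def)
  have gap: "(real d + 1) * (real n + 1) - (real d + 1) * (real k + 1) = (real d + 1) * (real n - real k)"
    by (simp add: algebra_simps)
  have P: "(\<Prod>j=n-d..n. real j) = B * fact d * (real d + 1)"
    unfolding prod_atLeastAtMost_eq_binomial_fact[OF assms] B_def by (simp add: algebra_simps)
  have "delta_term n d d k = F / fact d * ((real d + 1) * (real n - real k)) / ((real d + 1) * (B * (real d + 1)))"
    unfolding delta_term_eq[OF assms] real_binomial_eq_prod[of k d] AB gap F_def ..
  also have "\<dots> = F * (real n - real k) / (B * fact d * (real d + 1))"
    using \<open>B \<noteq> 0\<close> \<open>real d + 1 \<noteq> 0\<close> by (simp add: divide_simps)
  finally show ?thesis
    unfolding P F_def .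
qed

section \<open>The top term\<close>

lemma le_power_if_powr_le:
  fixes p \<mu> :: real
  assumes "0 \<le> p" and "p powr (1 / real (Suc c)) \<le> \<mu>"
  shows "p \<le> \<mu> ^ Suc c"
proof (cases "p = 0")
  case True
  then show ?thesis
    using assms by simp
next
  case False
  then have "p = (p powr (1 / real (Suc c))) powr real (Suc c)"
    using assms(1) by (simp add: powr_powr)
  also have "\<dots> = (p powr (1 / real (Suc c))) ^ Suc c"
    using False assms(1) by (intro powr_realpow) simp
  also have "\<dots> \<le> \<mu> ^ Suc c"
    by (rule power_mono) (use assms in auto)
  finally show ?thesis .
qed

lemma falling_prod_mult_le:
  assumes "1 \<le> d" and "d \<le> k" and "k \<le> n"
  shows "(\<Prod>j<d. real k - real j) * (real n - real k)
         \<le> real d ^ d / real (d + 1) ^ (d + 1) * (real n - (real d - 1) / 2) ^ (d + 1)"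
proof -
  txt \<open>AM-GM for the d + 1 numbers k - j (j < d) and d (n - k), whose mean is
    d (n - (d - 1) / 2) / (d + 1).\<close>
  define x where "x j = (if j < d then real k - real j else real d * (real n - real k))" for j
  define N where "N = real n - (real d - 1) / 2"
  have x_nonneg: "0 \<le> x j" for j
    unfolding x_def using assms by auto
  have "(\<Sum>j<d. real j) = real d * (real d - 1) / 2"
    by (induction d) (auto simp: field_simps)
  then have sum: "(\<Sum>j\<le>d. x j) = real d * N"
    by (simp add: lessThan_Suc_atMost[symmetric] x_def N_def sum_subtractf algebra_simps)
  have prod: "(\<Prod>j\<le>d. x j) = (\<Prod>j<d. real k - real j) * (real n - real k) * real d"
    by (simp add: lessThan_Suc_atMost[symmetric] x_def)
  have "(\<Prod>j\<le>d. x j) powr (1 / real (Suc d)) \<le> (\<Sum>j\<le>d. x j / real (Suc d))"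
    using arith_geom_mean[of "{..d}" x] x_nonneg by simp
  also have "\<dots> = real d * N / real (Suc d)"
    by (simp add: sum_divide_distrib[symmetric] sum)
  finally have "(\<Prod>j\<le>d. x j) \<le> (real d * N / real (Suc d)) ^ Suc d"
    by (rule le_power_if_powr_le[rotated]) (simp add: x_nonneg prod_nonneg)
  also have "\<dots> = real d ^ d / real (d + 1) ^ (d + 1) * N ^ (d + 1) * real d"
    by (simp add: power_divide power_mult_distrib)
  finally show ?thesis
    unfolding prod N_def by (rule mult_right_le_imp_le) (use assms(1) in simp)
qed

lemma delta_term_top_le:
  assumes "1 \<le> d" and "d < n" and "k \<le> n"
  shows "delta_term n d d k \<le> real d ^ d / real (d + 1) ^ (d + 1) *
           ((real n - (real d - 1) / 2) ^ (d + 1) / (\<Prod>j=n-d..n. real j))"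
proof -
  have "(\<Prod>j<d. real k - real j) * (real n - real k)
          \<le> real d ^ d / real (d + 1) ^ (d + 1) * (real n - (real d - 1) / 2) ^ (d + 1)"
  proof (cases "d \<le> k")
    case True
    then show ?thesis using falling_prod_mult_le assms by blast
  next
    case False
    then have "(\<Prod>j<d. real k - real j) = 0"
      by (intro prod_zero) (auto intro!: bexI[of _ k])
    moreover have "0 \<le> real n - (real d - 1) / 2"
      using assms by simp
    ultimately show ?thesis
      by (simp only: mult_zero_left) simp
  qed
  then show ?thesis
    unfolding delta_term_top_eq[OF assms(2)] times_divide_eq_right
    by (rule divide_right_mono) (simp add: prod_nonneg)
qed

lemma exists_mult_between:
  fixes a b :: nat
  assumes "0 < b"
  obtains t where "a \<le> b * t" and "b * t < a + b"
proof
  define t where "t = (a + b - 1) div b"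
  have "b * t + (a + b - 1) mod b = a + b - 1"
    unfolding t_def by (rule mult_div_mod_eq)
  moreover have "(a + b - 1) mod b < b"
    using assms by simp
  ultimately show "a \<le> b * t" and "b * t < a + b"
    using assms by linarith+
qed

lemma exists_nat_near_fraction:
  assumes "1 \<le> d" and "1 \<le> m"
  obtains t :: nat where "1 \<le> t" and "t \<le> m" and "real d * real m / (real d + 1) \<le> real t"
    and "real m / (real d + 1) \<le> real m + 1 - real t"
proof -
  obtain t where t_lo: "d * m \<le> (d + 1) * t" and t_hi: "(d + 1) * t < d * m + (d + 1)"
    using exists_mult_between[of "d + 1" "d * m"] by auto
  have "1 \<le> t"
    using t_lo assms by (cases "t = 0") auto
  have "t \<le> m"
  proof (rule ccontr)
    assume "\<not> t \<le> m"
    then have "(d + 1) * (m + 1) \<le> (d + 1) * t"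
      by (intro mult_le_mono2) simp
    then show False
      using t_hi assms(2) by (simp add: algebra_simps)
  qed
  have "real d * real m \<le> (real d + 1) * real t"
    using t_lo by (metis of_nat_add of_nat_le_iff of_nat_mult of_nat_1)
  then have "real d * real m / (real d + 1) \<le> real t"
    by (simp add: divide_le_eq mult.commute)
  moreover have "(real d + 1) * real t \<le> real d * real m + real d"
    using t_hi by (metis Suc_eq_plus1 less_Suc_eq_le of_nat_add of_nat_le_iff of_nat_mult of_nat_1 add.assoc)
  then have "real m \<le> (real d + 1) * (real m + 1 - real t)"
    by (simp add: algebra_simps)
  then have "real m / (real d + 1) \<le> real m + 1 - real t"
    by (simp add: divide_le_eq mult.commute)
  ultimately show ?thesis
    using that \<open>1 \<le> t\<close> \<open>t \<le> m\<close> by blast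
qed

lemma delta_term_top_witness:
  assumes "1 \<le> d" and "d < n"
  obtains K where "d \<le> K" and "K \<le> n" and
    "real d ^ d / real (d + 1) ^ (d + 1) * (real (n - d) ^ (d + 1) / (\<Prod>j=n-d..n. real j))
       \<le> delta_term n d d K"
proof -
  define m where "m = n - d"
  have "1 \<le> m"
    using assms(2) by (simp add: m_def)
  txt \<open>With t close to d m / (d + 1) and K = d - 1 + t, the factor n - K is close to m / (d + 1).\<close>
  obtain t where "1 \<le> t" "t \<le> m" and t_ge: "real d * real m / (real d + 1) \<le> real t"
    and "real m / (real d + 1) \<le> real m + 1 - real t"
    using exists_nat_near_fraction[OF assms(1) \<open>1 \<le> m\<close>] by blast
  define K where "K = d - 1 + t"
  have "d \<le> K" "K \<le> n"
    using \<open>1 \<le> t\<close> \<open>t \<le> m\<close> assms by (auto simp: K_def m_def)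
  have K: "real K = real d - 1 + real t"
    using assms(1) by (simp add: K_def of_nat_diff)
  have nK_ge: "real m / (real d + 1) \<le> real n - real K"
    using \<open>real m / (real d + 1) \<le> real m + 1 - real t\<close> assms(2) by (simp add: K m_def of_nat_diff)
  have "(real d * real m / (real d + 1)) ^ d \<le> (\<Prod>j<d. real K - real j)"
  proof -
    have "(real d * real m / (real d + 1)) ^ d \<le> (\<Prod>j<d. real t)"
      using t_ge by (simp add: power_mono)
    also have "\<dots> \<le> (\<Prod>j<d. real K - real j)"
      by (rule prod_mono) (auto simp: K)
    finally show ?thesis .
  qed
  then have "(real d * real m / (real d + 1)) ^ d * (real m / (real d + 1))
               \<le> (\<Prod>j<d. real K - real j) * (real n - real K)"
    using nK_ge by (rule mult_mono) (auto intro: prod_nonneg simp: K)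
  then have "real d ^ d / real (d + 1) ^ (d + 1) * real m ^ (d + 1)
               \<le> (\<Prod>j<d. real K - real j) * (real n - real K)"
    by (simp add: power_divide power_mult_distrib algebra_simps)
  then have "real d ^ d / real (d + 1) ^ (d + 1) * (real m ^ (d + 1) / (\<Prod>j=n-d..n. real j))
               \<le> delta_term n d d K"
    unfolding delta_term_top_eq[OF assms(2)] times_divide_eq_right
    by (rule divide_right_mono) (simp add: prod_nonneg)
  then show ?thesis
    using that \<open>d \<le> K\<close> \<open>K \<le> n\<close> by (simp add: m_def)
qed

section \<open>The terms below the top\<close>

lemma Suc_mult_power_mult_one_minus_le_1:
  fixes y :: real
  assumes "0 \<le> y" and "y \<le> 1"
  shows "real (Suc i) * y ^ i * (1 - y) \<le> 1"
proof -
  have "real (Suc i) * y ^ i = (\<Sum>j<Suc i. y ^ i)"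
    by simp
  also have "\<dots> \<le> (\<Sum>j<Suc i. y ^ j)"
    by (rule sum_mono) (use assms in \<open>auto intro: power_decreasing\<close>)
  finally have "real (Suc i) * y ^ i * (1 - y) \<le> (\<Sum>j<Suc i. y ^ j) * (1 - y)"
    using assms by (intro mult_right_mono) auto
  also have "\<dots> = 1 - y ^ Suc i"
    using one_diff_power_eq[of y "Suc i"] by (simp add: mult.commute)
  also have "\<dots> \<le> 1"
    using assms by simp
  finally show ?thesis .
qed

lemma power_one_minus_mult_one_plus_le_1:
  fixes a :: real
  assumes "0 \<le> a" and "a \<le> 1"
  shows "(1 - a) ^ i * (1 + real i * a) \<le> 1"
proof -
  have "(1 - a) ^ i * (1 + real i * a) \<le> (1 - a) ^ i * (1 + a) ^ i"
    using Bernoulli_inequality[of a i] assms by (intro mult_left_mono) auto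
  also have "\<dots> = (1 - a * a) ^ i"
    by (simp add: power_mult_distrib[symmetric] algebra_simps)
  also have "\<dots> \<le> 1"
    using assms by (intro power_le_one) (auto simp: mult_le_one)
  finally show ?thesis .
qed

lemma power_one_minus_le_div_Suc:
  fixes a s :: real
  assumes "0 \<le> a" and "a \<le> 1" and "0 < s" and "1 \<le> real i * a * s"
  shows "(1 - a) ^ i \<le> s / (s + 1)"
proof -
  have "0 < 1 + real i * a"
    using assms(1) by (simp add: add_pos_nonneg)
  then have "(1 - a) ^ i \<le> 1 / (1 + real i * a)"
    using power_one_minus_mult_one_plus_le_1[OF assms(1,2)] by (simp add: le_divide_eq)
  also have "\<dots> \<le> s / (s + 1)"
    using assms(3,4) \<open>0 < 1 + real i * a\<close> by (simp add: divide_simps algebra_simps)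
  finally show ?thesis .
qed

lemma real_binomial_le_mult_power:
  assumes "k \<le> N"
  shows "real (k choose i) \<le> real (N choose i) * ((real k + 1) / (real N + 1)) ^ i"
proof (cases "i \<le> k")
  case False
  then show ?thesis by (simp add: binomial_eq_0)
next
  case True
  let ?r = "(real k + 1) / (real N + 1)"
  have "(\<Prod>j<i. real k - real j) \<le> (\<Prod>j<i. (real N - real j) * ?r)"
  proof (rule prod_mono)
    fix j assume "j \<in> {..<i}"
    then have "j < k" using True by auto
    have "real k * (real j + 1) \<le> real N * (real j + 1)"
      using assms by (intro mult_right_mono) auto
    then have "(real k - real j) * (real N + 1) \<le> (real k + 1) * (real N - real j)"
      by (simp add: algebra_simps)
    then show "0 \<le> real k - real j \<and> real k - real j \<le> (real N - real j) * ?r"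
      using \<open>j < k\<close> by (simp add: field_simps)
  qed
  also have "\<dots> = (\<Prod>j<i. real N - real j) * ?r ^ i"
    by (simp only: prod.distrib prod_constant card_lessThan)
  finally show ?thesis
    unfolding real_binomial_eq_prod by (simp add: divide_right_mono mult.commute)
qed

text \<open>The ratio (k + 1) / (n - d + i + 1) at the point k + 1 = (i + 1) (n + 1) / (d + 1) where the
  linear factor in delta_term_eq vanishes.\<close>

definition majorant_base :: "nat \<Rightarrow> nat \<Rightarrow> nat \<Rightarrow> real" where
  "majorant_base n d i = (real i + 1) * (real n + 1) / ((real d + 1) * (real (n - d) + real i + 1))"

definition term_majorant :: "nat \<Rightarrow> nat \<Rightarrow> nat \<Rightarrow> real" where
  "term_majorant n d i = real (n - d + i choose i) * majorant_base n d i ^ i / (real i + 1)"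

lemma binomial_mult_gap_le_term_majorant:
  assumes "i \<le> d" and "d \<le> n"
  shows "real (k choose i) * ((real i + 1) * (real n + 1) - (real d + 1) * (real k + 1))
           \<le> (real i + 1) * (real n + 1) * term_majorant n d i"
proof (cases "(real i + 1) * (real n + 1) \<le> (real d + 1) * (real k + 1)")
  case True
  then have "real (k choose i) * ((real i + 1) * (real n + 1) - (real d + 1) * (real k + 1)) \<le> 0"
    by (simp add: mult_nonneg_nonpos)
  also have "0 \<le> (real i + 1) * (real n + 1) * term_majorant n d i"
    by (simp add: term_majorant_def majorant_base_def)
  finally show ?thesis .
next
  case False
  define m where "m = n - d"
  have n: "real n = real m + real d"
    using assms(2) by (simp add: m_def)
  define b where "b = (real i + 1) * (real n + 1) / ((real d + 1) * (real m + real i + 1))"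
  define y where "y = (real d + 1) * (real k + 1) / ((real i + 1) * (real n + 1))"
  have nonzero: "real i + 1 \<noteq> 0" "real n + 1 \<noteq> 0" "real d + 1 \<noteq> 0" "real m + real i + 1 \<noteq> 0"
    by linarith+
  have "(real i + 1) * (real n + 1) \<le> (real d + 1) * (real m + real i + 1)"
    using assms(1) unfolding n by (simp add: algebra_simps mult_right_mono)
  then have "(real d + 1) * (real k + 1) < (real d + 1) * (real m + real i + 1)"
    using False by linarith
  then have "k \<le> m + i"
    by (simp add: mult_less_cancel_left_pos)
  have "0 \<le> y" "y \<le> 1"
    using False by (auto simp: y_def)
  have x: "(real k + 1) / (real (m + i) + 1) = b * y"
    using nonzero by (simp add: b_def y_def divide_simps)
  have gap: "(real i + 1) * (real n + 1) - (real d + 1) * (real k + 1) = (real i + 1) * (real n + 1) * (1 - y)"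
    using nonzero by (simp add: y_def divide_simps)
  have "real (k choose i) * ((real i + 1) * (real n + 1) - (real d + 1) * (real k + 1))
          \<le> real (m + i choose i) * (b * y) ^ i * ((real i + 1) * (real n + 1) * (1 - y))"
    unfolding gap using real_binomial_le_mult_power[OF \<open>k \<le> m + i\<close>, of i] \<open>y \<le> 1\<close>
    unfolding x by (intro mult_right_mono) auto
  also have "\<dots> = real (m + i choose i) * b ^ i * (real n + 1) * (real (Suc i) * y ^ i * (1 - y))"
    by (simp add: power_mult_distrib algebra_simps)
  also have "\<dots> \<le> real (m + i choose i) * b ^ i * (real n + 1)"
    using Suc_mult_power_mult_one_minus_le_1[OF \<open>0 \<le> y\<close> \<open>y \<le> 1\<close>, of i]
    by (intro mult_left_le) (auto simp: b_def)
  also have "\<dots> = (real i + 1) * (real n + 1) * term_majorant n d i"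
    by (simp add: term_majorant_def majorant_base_def b_def m_def)
  finally show ?thesis .
qed

lemma delta_term_le_term_majorant:
  assumes "i \<le> d" and "d < n"
  shows "delta_term n d i k \<le> (real n + 1) / (real (n - d) * real (n choose d)) * term_majorant n d i"
proof -
  have "delta_term n d i k \<le> (real i + 1) * (real n + 1) * term_majorant n d i
                                / ((real i + 1) * real (n choose d) * real (n - d))"
    unfolding delta_term_eq[OF assms(2)]
    using binomial_mult_gap_le_term_majorant[of i d n k] assms by (intro divide_right_mono) auto
  moreover have "real i + 1 \<noteq> 0"
    by linarith
  ultimately show ?thesis
    by (simp add: mult.assoc mult.commute)
qed

lemma majorant_base_power_le:
  assumes "3 \<le> n - d" and "1 \<le> i"
  shows "majorant_base n d i ^ i
           \<le> majorant_base n d (i + 1) ^ i * ((real (n - d) + real i + 1) / (real (n - d) + real i + 2))"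
proof -
  define m s where "m = real (n - d)" and "s = real (n - d) + real i + 1"
  have "0 < s" "m \<le> s"
    by (auto simp: s_def m_def)
  define a where "a = m / ((real i + 2) * s)"
  have base: "majorant_base n d i = majorant_base n d (i + 1) * (1 - a)"
    using \<open>0 < s\<close> by (simp add: majorant_base_def a_def s_def m_def divide_simps)
      (simp add: algebra_simps)
  have "1 * s \<le> (real i + 2) * s"
    using \<open>0 < s\<close> by (intro mult_right_mono) auto
  then have "m \<le> (real i + 2) * s"
    using \<open>m \<le> s\<close> by linarith
  then have "0 \<le> a" "a \<le> 1"
    using \<open>0 < s\<close> by (auto simp: a_def m_def divide_simps)
  have "real i * 3 \<le> real i * m"
    using assms(1) by (intro mult_left_mono) (auto simp: m_def)
  then have "real i + 2 \<le> real i * m"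
    using assms(2) by linarith
  then have "1 \<le> real i * a * s"
    using \<open>0 < s\<close> by (simp add: a_def divide_simps)
  then have "(1 - a) ^ i \<le> s / (s + 1)"
    using power_one_minus_le_div_Suc \<open>0 \<le> a\<close> \<open>a \<le> 1\<close> \<open>0 < s\<close> by blast
  then show ?thesis
    unfolding base power_mult_distrib
    by (intro mult_left_mono) (auto simp: majorant_base_def s_def add.assoc)
qed

lemma term_majorant_le_next:
  assumes "d < n" and "3 \<le> n - d" and "1 \<le> i"
  shows "term_majorant n d i \<le> (real d + 1) / (real n + 1) * term_majorant n d (i + 1)"
proof -
  define s c b' where "s = real (n - d) + real i + 1" and "c = real (n - d + i choose i)"
    and "b' = majorant_base n d (i + 1)"
  have nonzero: "real i + 1 \<noteq> 0" "real i + 2 \<noteq> 0" "real n + 1 \<noteq> 0" "real d + 1 \<noteq> 0"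
    "s \<noteq> 0" "s + 1 \<noteq> 0"
    by (auto simp: s_def)
  have "real (Suc i) * real (Suc (n - d + i) choose Suc i) = real (Suc (n - d + i)) * c"
    unfolding c_def by (metis Suc_times_binomial of_nat_mult)
  then have binom: "real (n - d + (i + 1) choose (i + 1)) = s * c / (real i + 1)"
    using nonzero by (simp add: s_def divide_simps algebra_simps)
  have "term_majorant n d (i + 1) = real (n - d + (i + 1) choose (i + 1)) * b' ^ (i + 1) / (real i + 2)"
    by (simp add: term_majorant_def b'_def add_ac del: binomial_Suc_Suc)
  then have "(real d + 1) / (real n + 1) * term_majorant n d (i + 1)
               = s * c / (real i + 1) * b' ^ i / (real i + 2) * ((real d + 1) / (real n + 1) * b')"
    unfolding binom by (simp add: ac_simps)
  also have "(real d + 1) / (real n + 1) * b' = (real i + 2) / (s + 1)"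
    using nonzero by (simp add: b'_def majorant_base_def s_def divide_simps add_ac)
  finally have next_eq: "(real d + 1) / (real n + 1) * term_majorant n d (i + 1)
                           = c / (real i + 1) * (b' ^ i * (s / (s + 1)))"
    using nonzero by (simp add: divide_simps)
  have "term_majorant n d i = c / (real i + 1) * majorant_base n d i ^ i"
    by (simp add: term_majorant_def c_def)
  also have "\<dots> \<le> c / (real i + 1) * (b' ^ i * (s / (s + 1)))"
    using majorant_base_power_le[OF assms(2,3)]
    by (intro mult_left_mono) (auto simp: b'_def s_def c_def add.assoc)
  finally show ?thesis
    unfolding next_eq .
qed

lemma term_majorant_top_le:
  assumes "2 \<le> d" and "d < n"
  shows "term_majorant n d (d - 1) \<le> real (n choose d) / real n"
proof -
  define b where "b = real d * (real n + 1) / ((real d + 1) * real n)"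
  have "term_majorant n d (d - 1) = real (n - 1 choose (d - 1)) * b ^ (d - 1) / real d"
    using assms by (simp add: term_majorant_def majorant_base_def b_def of_nat_diff Suc_diff_le)
  also have "\<dots> \<le> real (n - 1 choose (d - 1)) / real d"
  proof -
    have "real d * (real n + 1) \<le> (real d + 1) * real n"
      using assms by (simp add: algebra_simps)
    then have "b ^ (d - 1) \<le> 1"
      using assms by (intro power_le_one) (auto simp: b_def divide_le_eq)
    moreover have "0 \<le> b"
      by (simp add: b_def)
    ultimately show ?thesis
      by (intro divide_right_mono mult_right_le_one_le) auto
  qed
  also have "\<dots> = real (n choose d) / real n"
    using times_binomial_minus1_eq[of d n] assms
    by (simp add: divide_simps) (metis of_nat_mult mult.commute)
  finally show ?thesis .
qed

lemma term_majorant_le_geometric: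
  assumes "2 \<le> d" and "d < n" and "3 \<le> n - d" and "j \<le> d - 2"
  shows "term_majorant n d (d - 1 - j) \<le> ((real d + 1) / (real n + 1)) ^ j * term_majorant n d (d - 1)"
  using assms(4)
proof (induction j)
  case 0
  then show ?case by simp
next
  case (Suc j)
  have "d - 1 - Suc j + 1 = d - 1 - j" "1 \<le> d - 1 - Suc j"
    using Suc.prems by auto
  then have "term_majorant n d (d - 1 - Suc j)
               \<le> (real d + 1) / (real n + 1) * term_majorant n d (d - 1 - j)"
    using term_majorant_le_next[OF assms(2,3), of "d - 1 - Suc j"] by simp
  also have "\<dots> \<le> (real d + 1) / (real n + 1)
                      * (((real d + 1) / (real n + 1)) ^ j * term_majorant n d (d - 1))"
    using Suc by (intro mult_left_mono) auto
  finally show ?case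
    by (simp add: mult.assoc)
qed

lemma sum_power_reverse_le:
  fixes g :: real
  assumes "0 \<le> g" and "g < 1"
  shows "(\<Sum>i=1..D. g ^ (D - i)) \<le> 1 / (1 - g)"
proof -
  have "(\<Sum>i=1..D. g ^ (D - i)) = (\<Sum>k<D. g ^ (D - Suc k))"
    using sum.atLeast1_atMost_eq[of "\<lambda>i. g ^ (D - i)" D] by simp
  also have "\<dots> = (\<Sum>k<D. g ^ k)"
    by (rule sum.nat_diff_reindex)
  also have "\<dots> \<le> 1 / (1 - g)"
  proof -
    have "(1 - g) * (\<Sum>k<D. g ^ k) = 1 - g ^ D"
      by (rule one_diff_power_eq[symmetric])
    also have "\<dots> \<le> 1"
      using assms by simp
    finally show ?thesis
      using assms by (simp add: le_divide_eq mult.commute)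
  qed
  finally show ?thesis .
qed

lemma sum_delta_term_below_top_le:
  assumes "2 \<le> d" and "d < n" and "3 \<le> n - d"
  shows "(\<Sum>i=1..d-1. delta_term n d i (k i)) \<le> (real n + 1) ^ 2 / (real n * real (n - d) ^ 2)"
proof -
  define g m A where "g = (real d + 1) / (real n + 1)" and "m = real (n - d)"
    and "A = real (n choose d)"
  define K where "K = (real n + 1) / (m * A)"
  have "0 < m" "0 < A" "0 \<le> K" "0 \<le> g" "g < 1"
    using assms by (auto simp: m_def A_def K_def g_def)
  have term_le: "delta_term n d i (k i) \<le> K * (A / real n) * g ^ (d - 1 - i)" if "i \<in> {1..d-1}" for i
  proof -
    have "i \<le> d"
      using that by auto
    then have "delta_term n d i (k i) \<le> K * term_majorant n d i"
      using delta_term_le_term_majorant[of i d n "k i"] assms by (simp add: K_def m_def A_def)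
    also have "\<dots> \<le> K * (g ^ (d - 1 - i) * term_majorant n d (d - 1))"
      using term_majorant_le_geometric[OF assms, of "d - 1 - i"] that \<open>0 \<le> K\<close>
      by (intro mult_left_mono) (auto simp: g_def)
    also have "\<dots> \<le> K * (g ^ (d - 1 - i) * (A / real n))"
      using term_majorant_top_le[OF assms(1,2)] \<open>0 \<le> K\<close> \<open>0 \<le> g\<close>
      by (intro mult_left_mono) (auto simp: A_def)
    finally show ?thesis
      by (simp add: ac_simps)
  qed
  have "(\<Sum>i=1..d-1. delta_term n d i (k i)) \<le> (\<Sum>i=1..d-1. K * (A / real n) * g ^ (d - 1 - i))"
    by (rule sum_mono) (rule term_le)
  also have "\<dots> \<le> K * (A / real n) * (1 / (1 - g))"
    unfolding sum_distrib_left[symmetric]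
    using sum_power_reverse_le[OF \<open>0 \<le> g\<close> \<open>g < 1\<close>, of "d - 1"] \<open>0 \<le> K\<close> \<open>0 < A\<close>
    by (intro mult_left_mono) auto
  also have "1 - g = m / (real n + 1)"
    using assms by (simp add: g_def m_def of_nat_diff divide_simps)
  also have "K * (A / real n) * (1 / (m / (real n + 1))) = (real n + 1) ^ 2 / (real n * m ^ 2)"
    using \<open>0 < m\<close> \<open>0 < A\<close> by (simp add: K_def divide_simps power2_eq_square)
  finally show ?thesis
    by (simp add: m_def)
qed

lemma sum_atLeast1_atMost_split_last:
  fixes f :: "nat \<Rightarrow> 'a::comm_monoid_add"
  assumes "1 \<le> d"
  shows "(\<Sum>i=1..d. f i) = (\<Sum>i=1..d-1. f i) + f d"
  using assms by (cases d) (auto simp: sum.cl_ivl_Suc)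

lemma delta_le_1:
  assumes "d \<le> n" and "lam \<le> n choose d"
  shows "delta n d lam \<le> 1"
proof -
  have "delta n d lam \<le> real lam / real (n choose d)"
    unfolding delta_def by simp
  also have "\<dots> \<le> 1"
    using assms by (simp add: divide_le_eq)
  finally show ?thesis .
qed

lemma square_ratio_le_error_term:
  assumes "2 \<le> d" and "d < n"
  shows "(real n + 1) ^ 2 / (real n * real (n - d) ^ 2)
           \<le> real (d + 1) * real (n + 1) / (real (d - 1) * real (n - d) ^ 2)"
proof -
  have "(real n + 1) * real (d - 1) \<le> real n * real (d + 1)"
    using assms by (simp add: of_nat_diff algebra_simps)
  then have "(real n + 1) / real n \<le> real (d + 1) / real (d - 1)"
    using assms by (simp add: divide_simps mult.commute)
  then have "(real n + 1) / real n * ((real n + 1) / real (n - d) ^ 2)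
               \<le> real (d + 1) / real (d - 1) * ((real n + 1) / real (n - d) ^ 2)"
    by (intro mult_right_mono) auto
  then show ?thesis
    by (simp add: power2_eq_square ac_simps)
qed

lemma one_le_error_term:
  assumes "2 \<le> d" and "d < n" and "n - d \<le> 2"
  shows "1 \<le> real (d + 1) * real (n + 1) / (real (d - 1) * real (n - d) ^ 2)"
proof -
  have "(d - 1) * (n - d) ^ 2 \<le> (d - 1) * 2 ^ 2"
    using assms(3) by (intro mult_le_mono2 power_mono) auto
  also have "\<dots> \<le> (d + 1) * (n + 1)"
    using assms by (intro mult_le_mono) auto
  finally have "real (d - 1) * real (n - d) ^ 2 \<le> real (d + 1) * real (n + 1)"
    by (metis of_nat_le_iff of_nat_mult of_nat_power)
  moreover have "0 < real (d - 1) * real (n - d) ^ 2"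
    using assms by simp
  ultimately show ?thesis
    using le_divide_eq_1_pos by blast
qed

lemma delta_upper_bound:
  assumes "2 \<le> d" and "d < n" and "lam \<le> n choose d"
  shows "delta n d lam \<le>
           real d ^ d / real (d + 1) ^ (d + 1) *
             ((real n - (real d - 1) / 2) ^ (d + 1) / (\<Prod>j=n-d..n. real j))
           + real (d + 1) * real (n + 1) / (real (d - 1) * real (n - d) ^ 2)"
    (is "_ \<le> ?M + ?S")
proof -
  have "Suc n choose d = (n choose (d - 1)) + (n choose d)"
    using assms(1) by (cases d) auto
  moreover have "0 < n choose (d - 1)"
    using assms(2) by simp
  ultimately have "lam < Suc n choose d"
    using assms(3) by linarith
  then have rep: "cascade_rep d lam (cascade_seq d lam)" and "cascade_seq d lam d \<le> n"
    using cascade_rep_cascade_seq[of lam "Suc n" d] assms(1) by auto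
  have split: "delta n d lam = (\<Sum>i=1..d-1. delta_term n d i (cascade_seq d lam i))
                               + delta_term n d d (cascade_seq d lam d)"
    using delta_eq_sum_delta_term[OF rep] sum_atLeast1_atMost_split_last[of d] assms(1) by simp
  have top: "delta_term n d d (cascade_seq d lam d) \<le> ?M"
    using delta_term_top_le \<open>cascade_seq d lam d \<le> n\<close> assms by simp
  show ?thesis
  proof (cases "3 \<le> n - d")
    case True
    then show ?thesis
      using split top square_ratio_le_error_term[OF assms(1,2)]
        sum_delta_term_below_top_le[OF assms(1,2) True, where k = "cascade_seq d lam"]
      by linarith
  next
    case False
    have "0 \<le> ?M"
      using assms(2) by (auto intro!: mult_nonneg_nonneg divide_nonneg_nonneg prod_nonneg)
    then show ?thesis
      using delta_le_1[of d n lam] one_le_error_term[of d n] False assms by linarith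
  qed
qed

lemma delta_lower_witness:
  assumes "2 \<le> d" and "d < n"
  obtains lam where "lam \<le> n choose d" and
    "real d ^ d / real (d + 1) ^ (d + 1) * (real (n - d) ^ (d + 1) / (\<Prod>j=n-d..n. real j))
       \<le> delta n d lam"
proof -
  obtain K where "d \<le> K" "K \<le> n" and K:
    "real d ^ d / real (d + 1) ^ (d + 1) * (real (n - d) ^ (d + 1) / (\<Prod>j=n-d..n. real j))
       \<le> delta_term n d d K"
    using delta_term_top_witness[of d n] assms by auto
  define k where "k i = (if i < d then i - 1 else if i = d then K else 0)" for i
  have below_top: "(\<Sum>i=1..d-1. k i choose i) = 0" "(\<Sum>i=1..d-1. delta_term n d i (k i)) = 0"
    by (auto intro!: sum.neutral simp: k_def delta_term_def binomial_eq_0)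
  have rep: "cascade_rep d (K choose d) k"
    unfolding cascade_rep_def
  proof (intro conjI)
    show "\<forall>i. i \<notin> {1..d} \<longrightarrow> k i = 0" "\<forall>i\<in>{1..<d}. k i < k (Suc i)"
      using assms(1) \<open>d \<le> K\<close> by (auto simp: k_def)
    have "(\<Sum>i=1..d. k i choose i) = (\<Sum>i=1..d-1. k i choose i) + (k d choose d)"
      using assms(1) by (intro sum_atLeast1_atMost_split_last) simp
    then show "K choose d = (\<Sum>i=1..d. k i choose i)"
      unfolding below_top(1) by (simp add: k_def)
  qed
  have "delta n d (K choose d) = (\<Sum>i=1..d-1. delta_term n d i (k i)) + delta_term n d d (k d)"
    unfolding delta_eq_sum_delta_term[OF rep]
    using assms(1) by (intro sum_atLeast1_atMost_split_last) simp
  then have "delta n d (K choose d) = delta_term n d d K"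
    unfolding below_top(2) by (simp add: k_def)
  moreover have "K choose d \<le> n choose d"
    using \<open>K \<le> n\<close> by (rule binomial_right_mono)
  ultimately show ?thesis
    using that K by auto
qed

theorem lemma6p2:
  fixes n d :: nat
  assumes "2 \<le> d" and "d < n"
  shows "real d ^ d / real (d + 1) ^ (d + 1) *
           (real (n - d) ^ (d + 1) / (\<Prod>j=n-d..n. real j)) \<le> delta_bar n d \<and>
         delta_bar n d \<le>
           real d ^ d / real (d + 1) ^ (d + 1) *
             ((real n - (real d - 1) / 2) ^ (d + 1) / (\<Prod>j=n-d..n. real j))
           + real (d + 1) * real (n + 1) / (real (d - 1) * real (n - d) ^ 2)"
proof
  have fin: "finite (delta n d ` {0..n choose d})"
    by simp
  obtain lam where "lam \<le> n choose d" and
    "real d ^ d / real (d + 1) ^ (d + 1) * (real (n - d) ^ (d + 1) / (\<Prod>j=n-d..n. real j))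
       \<le> delta n d lam"
    using delta_lower_witness[OF assms] .
  moreover have "delta n d lam \<le> delta_bar n d"
    unfolding delta_bar_def using fin \<open>lam \<le> n choose d\<close> by (intro Max_ge) auto
  ultimately show "real d ^ d / real (d + 1) ^ (d + 1) *
           (real (n - d) ^ (d + 1) / (\<Prod>j=n-d..n. real j)) \<le> delta_bar n d"
    by linarith
  show "delta_bar n d \<le>
           real d ^ d / real (d + 1) ^ (d + 1) *
             ((real n - (real d - 1) / 2) ^ (d + 1) / (\<Prod>j=n-d..n. real j))
           + real (d + 1) * real (n + 1) / (real (d - 1) * real (n - d) ^ 2)"
    unfolding delta_bar_def using fin delta_upper_bound[OF assms] by (subst Max_le_iff) auto
qed

end
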